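(* Let $\mathcal F\subseteq 2^{[n]}$ and $K>0$. If $\lambda_{n-|F|}(\mathcal U(F))\le K$ for all $F\in\mathcal F$, then $\lambda_n(\mathcal F)\le K$.
   Context: For a family $\mathcal G$ of subsets of an $m$-element ground set, the Lubell mass is $\lambda_m(\mathcal G)=\sum_{G\in\mathcal G}\binom{m}{|G|}^{-1}$. For $F\in\mathcal F$, $\mathcal U(F)=\mathcal U_{\mathcal F}(F):=\{G\setminus F:\ G\in\mathcal F,\ F\subseteq G\}$, a family of subsets of the $(n-|F|)$-element set $[n]\setminus F$. *)

theory Defs
  imports Complex_Main
begin

definition lubell :: "nat \<Rightarrow> 'a set set \<Rightarrow> real" where
  "lubell m \<G> = (\<Sum>G\<in>\<G>. 1 / real (m choose card G))"

definition up_family :: "'a set set \<Rightarrow> 'a set \<Rightarrow> 'a set set" where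
  "up_family \<F> A = {G - A | G. G \<in> \<F> \<and> A \<subseteq> G}"

end

theory Submission
  imports Defs
begin

text \<open>
  If \<open>{} \<in> \<F>\<close> then \<open>U({}) = \<F>\<close> and there is nothing to prove. Otherwise double
  counting the pairs \<open>(x, G)\<close> with \<open>x \<in> G \<in> \<F>\<close> expresses \<open>\<lambda>_n(\<F>)\<close> as the average over
  \<open>x \<in> [n]\<close> of \<open>\<lambda>_(n-1)(U({x}))\<close>, because \<open>|G| / C(n-1, |G|-1) = n / C(n, |G|)\<close>.
  The up-families of \<open>U({x})\<close> are the \<open>U({x} \<union> H)\<close>, so \<open>U({x})\<close>, a family on the
  \<open>(n-1)\<close>-element set \<open>[n] - {x}\<close>, inherits the hypothesis, and induction on \<open>n\<close> bounds
  every term of the average by \<open>K\<close>.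
\<close>

lemma up_familyI: "G \<in> \<F> \<Longrightarrow> A \<subseteq> G \<Longrightarrow> G - A \<in> up_family \<F> A"
  unfolding up_family_def by blast

lemma up_familyE:
  assumes "B \<in> up_family \<F> A"
  obtains G where "G \<in> \<F>" "A \<subseteq> G" "B = G - A"
  using assms unfolding up_family_def by blast

lemma up_family_empty [simp]: "up_family \<F> {} = \<F>"
  by (auto intro: up_familyI[where A = "{}", simplified] elim: up_familyE)

lemma up_family_up_family:
  assumes "A \<inter> H = {}"
  shows "up_family (up_family \<F> A) H = up_family \<F> (A \<union> H)"
proof (intro equalityI subsetI)
  fix B assume "B \<in> up_family (up_family \<F> A) H"
  then obtain G where "G \<in> \<F>" "A \<subseteq> G" "H \<subseteq> G - A" "B = G - A - H"
    by (metis up_familyE)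
  then have "A \<union> H \<subseteq> G" "B = G - (A \<union> H)"
    by auto
  then show "B \<in> up_family \<F> (A \<union> H)"
    using \<open>G \<in> \<F>\<close> by (simp add: up_familyI)
next
  fix B assume "B \<in> up_family \<F> (A \<union> H)"
  then obtain G where "G \<in> \<F>" "A \<union> H \<subseteq> G" "B = G - (A \<union> H)"
    by (rule up_familyE)
  then have "G - A \<in> up_family \<F> A" "H \<subseteq> G - A" "B = G - A - H"
    using assms by (auto intro: up_familyI)
  then show "B \<in> up_family (up_family \<F> A) H"
    by (simp add: up_familyI)
qed

lemma binomial_Suc_inverse_eq:
  "real (Suc j) / real (k choose j) = real (Suc k) / real (Suc k choose Suc j)"
proof (cases "j \<le> k")
  case True
  have "real (Suc k) * real (k choose j) = real (Suc k choose Suc j) * real (Suc j)"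
    using Suc_times_binomial_eq[of k j] by (metis of_nat_mult)
  moreover have "real (k choose j) > 0" "real (Suc k choose Suc j) > 0"
    using True by (simp_all del: binomial_Suc_Suc)
  ultimately show ?thesis
    by (simp add: field_simps)
next
  case False
  \<comment> \<open>both denominators vanish, and \<open>x / 0 = 0\<close>\<close>
  then show ?thesis
    by (simp add: binomial_eq_0 del: binomial_Suc_Suc)
qed

lemma lubell_up_family_singleton:
  assumes "\<And>G. G \<in> \<F> \<Longrightarrow> finite G"
  shows "lubell m (up_family \<F> {x}) = (\<Sum>G | G \<in> \<F> \<and> x \<in> G. 1 / real (m choose (card G - 1)))"
proof -
  have "up_family \<F> {x} = (\<lambda>G. G - {x}) ` {G \<in> \<F>. x \<in> G}"
    by (auto intro: up_familyI elim: up_familyE)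
  moreover have "inj_on (\<lambda>G. G - {x}) {G \<in> \<F>. x \<in> G}"
    by (rule inj_onI) (metis CollectD insert_Diff)
  ultimately show ?thesis
    unfolding lubell_def using assms by (simp add: sum.reindex)
qed

lemma lubell_eq_average_up_family_singleton:
  assumes "finite S" "\<F> \<subseteq> Pow S" "{} \<notin> \<F>" "card S = Suc m"
  shows "lubell (Suc m) \<F> = (\<Sum>x\<in>S. lubell m (up_family \<F> {x})) / real (Suc m)"
proof -
  have fin_\<F>: "finite \<F>" and fin_G: "\<And>G. G \<in> \<F> \<Longrightarrow> finite G"
    using assms(1,2) by (auto intro: finite_subset)
  have "(\<Sum>x\<in>S. lubell m (up_family \<F> {x}))
      = (\<Sum>x\<in>S. \<Sum>G | G \<in> \<F> \<and> x \<in> G. 1 / real (m choose (card G - 1)))"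
    using fin_G by (simp add: lubell_up_family_singleton)
  also have "\<dots> = (\<Sum>G\<in>\<F>. \<Sum>x | x \<in> S \<and> x \<in> G. 1 / real (m choose (card G - 1)))"
    by (rule sum.swap_restrict[OF \<open>finite S\<close> fin_\<F>])
  also have "\<dots> = (\<Sum>G\<in>\<F>. real (card G) / real (m choose (card G - 1)))"
  proof (intro sum.cong refl)
    fix G assume "G \<in> \<F>"
    then have "{x. x \<in> S \<and> x \<in> G} = G"
      using assms(2) by auto
    then show "(\<Sum>x | x \<in> S \<and> x \<in> G. 1 / real (m choose (card G - 1)))
        = real (card G) / real (m choose (card G - 1))"
      by simp
  qed
  also have "\<dots> = (\<Sum>G\<in>\<F>. real (Suc m) / real (Suc m choose card G))"
  proof (intro sum.cong refl)
    fix G assume "G \<in> \<F>"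
    then obtain j where "card G = Suc j"
      using assms(3) fin_G by (metis card_gt_0_iff gr0_implies_Suc)
    then show "real (card G) / real (m choose (card G - 1)) = real (Suc m) / real (Suc m choose card G)"
      using binomial_Suc_inverse_eq[of j m] by simp
  qed
  also have "\<dots> = real (Suc m) * lubell (Suc m) \<F>"
    unfolding lubell_def by (simp add: sum_distrib_left)
  finally show ?thesis
    by simp
qed

lemma up_family_subset_Pow: "\<F> \<subseteq> Pow S \<Longrightarrow> up_family \<F> A \<subseteq> Pow (S - A)"
proof
  fix B assume "\<F> \<subseteq> Pow S" "B \<in> up_family \<F> A"
  then show "B \<in> Pow (S - A)"
    by (metis Diff_mono PowD PowI order_refl subsetD up_familyE)
qed

lemma up_family_bound_inherited:
  assumes "finite S" "\<F> \<subseteq> Pow S" "x \<in> S"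
    and "\<forall>G\<in>\<F>. lubell (card S - card G) (up_family \<F> G) \<le> K"
  shows "\<forall>H\<in>up_family \<F> {x}. lubell (card (S - {x}) - card H) (up_family (up_family \<F> {x}) H) \<le> K"
proof
  fix H assume "H \<in> up_family \<F> {x}"
  then obtain G where "G \<in> \<F>" "{x} \<subseteq> G" "H = G - {x}"
    by (rule up_familyE)
  then have "G = insert x H" "x \<notin> H" "finite H"
    using assms(1,2) by (auto intro: finite_subset)
  then have "card G = Suc (card H)" "up_family (up_family \<F> {x}) H = up_family \<F> G"
    by (simp_all add: up_family_up_family)
  moreover have "card S = Suc (card (S - {x}))"
    using assms(1,3) by (rule card_Suc_Diff1[symmetric])
  ultimately have "card (S - {x}) - card H = card S - card G"
    "up_family (up_family \<F> {x}) H = up_family \<F> G"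
    by simp_all
  then show "lubell (card (S - {x}) - card H) (up_family (up_family \<F> {x}) H) \<le> K"
    using assms(4) \<open>G \<in> \<F>\<close> by simp
qed

lemma lubell_le_if_up_family_lubell_le:
  assumes "finite S" "\<F> \<subseteq> Pow S" "K \<ge> 0"
    and "\<forall>F\<in>\<F>. lubell (card S - card F) (up_family \<F> F) \<le> K"
  shows "lubell (card S) \<F> \<le> K"
  using assms
proof (induction "card S" arbitrary: S \<F>)
  case 0
  then have "\<F> \<subseteq> {{}}"
    by auto
  then consider "\<F> = {}" | "{} \<in> \<F>"
    by blast
  then show ?case
    using 0 by cases (force simp: lubell_def)+
next
  case (Suc m)
  show ?case
  proof (cases "{} \<in> \<F>")
    case True
    then show ?thesis
      using Suc.prems(4) by force
  next
    case False
    have "lubell m (up_family \<F> {x}) \<le> K" if "x \<in> S" for x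
    proof -
      have "card (S - {x}) = m"
        using Suc.hyps(2) \<open>x \<in> S\<close> by simp
      then show ?thesis
        using Suc.hyps(1) Suc.prems \<open>x \<in> S\<close> up_family_subset_Pow up_family_bound_inherited
        by (metis finite_Diff)
    qed
    then have "(\<Sum>x\<in>S. lubell m (up_family \<F> {x})) / real (Suc m) \<le> (\<Sum>x\<in>S. K) / real (Suc m)"
      by (intro divide_right_mono sum_mono) auto
    then show ?thesis
      using lubell_eq_average_up_family_singleton[OF Suc.prems(1,2) False Suc.hyps(2)[symmetric]]
      by (simp add: Suc.hyps(2)[symmetric])
  qed
qed

theorem proposition2p2:
  fixes n :: nat and \<F> :: "nat set set" and K :: real
  assumes "\<F> \<subseteq> Pow {1..n}"
    and "K > 0"
    and "\<forall>F\<in>\<F>. lubell (n - card F) (up_family \<F> F) \<le> K"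
  shows "lubell n \<F> \<le> K"
  using lubell_le_if_up_family_lubell_le[of "{1..n}" \<F> K] assms by simp

end
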